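(* Let $\mathfrak s$ be a finite-dimensional real solvable Lie algebra such that $[\mathfrak s,\mathfrak s]$ has codimension $1$ in $\mathfrak s$. If $\mathfrak s$ admits an abelian complex structure, then $\mathfrak s$ is isomorphic to $\mathfrak{aff}(\mathbb R)$, the $2$-dimensional non-abelian Lie algebra (spanned by $x,y$ with $[x,y]=x$).
   Context: An abelian complex structure on a real Lie algebra $\mathfrak g$ is a linear map $J$ with $J^2=-\mathrm{Id}$ and $[Jx,Jy]=[x,y]$ for all $x,y\in\mathfrak g$. *)

theory Defs
  imports "HOL-Analysis.Analysis"
begin

definition lie_algebra :: "('a::euclidean_space \<Rightarrow> 'a \<Rightarrow> 'a) \<Rightarrow> bool" where
  "lie_algebra br \<longleftrightarrow> bilinear br \<and> (\<forall>x. br x x = 0) \<and>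
     (\<forall>x y z. br x (br y z) + br y (br z x) + br z (br x y) = 0)"

definition bracket_span :: "('a::euclidean_space \<Rightarrow> 'a \<Rightarrow> 'a) \<Rightarrow> 'a set \<Rightarrow> 'a set \<Rightarrow> 'a set" where
  "bracket_span br A B = span {br x y | x y. x \<in> A \<and> y \<in> B}"

fun derived_series :: "('a::euclidean_space \<Rightarrow> 'a \<Rightarrow> 'a) \<Rightarrow> nat \<Rightarrow> 'a set" where
  "derived_series br 0 = UNIV"
| "derived_series br (Suc k) = bracket_span br (derived_series br k) (derived_series br k)"

definition solvable_lie :: "('a::euclidean_space \<Rightarrow> 'a \<Rightarrow> 'a) \<Rightarrow> bool" where
  "solvable_lie br \<longleftrightarrow> (\<exists>k. derived_series br k = {0})"

definition abelian_complex_structure ::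
  "('a::euclidean_space \<Rightarrow> 'a \<Rightarrow> 'a) \<Rightarrow> ('a \<Rightarrow> 'a) \<Rightarrow> bool" where
  "abelian_complex_structure br J \<longleftrightarrow> linear J \<and> (\<forall>x. J (J x) = - x) \<and>
     (\<forall>x y. br (J x) (J y) = br x y)"

definition lie_iso :: "('a::euclidean_space \<Rightarrow> 'a \<Rightarrow> 'a) \<Rightarrow> ('b::euclidean_space \<Rightarrow> 'b \<Rightarrow> 'b)
    \<Rightarrow> ('a \<Rightarrow> 'b) \<Rightarrow> bool" where
  "lie_iso br1 br2 f \<longleftrightarrow> linear f \<and> bij f \<and> (\<forall>u v. f (br1 u v) = br2 (f u) (f v))"

text \<open>aff(R) on R^2 = real \<times> real with basis x = (1,0), y = (0,1), [x,y] = x: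
  [(a,b),(c,d)] = (ad - bc) x.\<close>
definition aff_br :: "real \<times> real \<Rightarrow> real \<times> real \<Rightarrow> real \<times> real" where
  "aff_br u v = (fst u * snd v - snd u * fst v, 0)"

end

theory Submission
  imports Defs
begin

text \<open>An abelian complex structure \<open>J\<close> forces \<open>[g, g]\<close> to be abelian: in the
  complexification the \<open>i\<close>- and \<open>-i\<close>-eigenspaces of \<open>J\<close> are abelian subalgebras spanning
  everything, and a Lie algebra that is the sum of two abelian subalgebras is metabelian.
  If \<open>n = [g, g]\<close> has codimension one, write \<open>g = \<real> x + n\<close>; then \<open>ad x\<close> maps the abelian
  ideal \<open>n\<close> onto, hence injectively into, itself, and \<open>[x, u] = [J x, J u]\<close> shows
  \<open>n \<inter> J n = 0\<close>, so \<open>dim n \<le> 1\<close>. A complex structure rules out \<open>dim g = 1\<close>, so \<open>g\<close> is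
  the two-dimensional non-abelian Lie algebra.\<close>

lemma lie_algebra_bilinear: "lie_algebra br \<Longrightarrow> bilinear br"
  unfolding lie_algebra_def by blast

lemma lie_algebra_alternating: "lie_algebra br \<Longrightarrow> br x x = 0"
  unfolding lie_algebra_def by blast

lemma lie_algebra_antisym:
  assumes "lie_algebra br"
  shows "br x y = - br y x"
proof -
  note bl = lie_algebra_bilinear[OF assms] and alt = lie_algebra_alternating[OF assms]
  have "br (x + y) (x + y) = br x x + br y x + (br x y + br y y)"
    by (simp only: bilinear_ladd[OF bl] bilinear_radd[OF bl])
  then have "br x y + br y x = 0" by (simp add: alt add.commute)
  then show ?thesis by (simp add: eq_neg_iff_add_eq_0)
qed

lemma lie_algebra_jacobi_derivation:
  assumes "lie_algebra br"
  shows "br x (br y z) = br (br x y) z + br y (br x z)"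
proof -
  have "br x (br y z) + br y (br z x) + br z (br x y) = 0"
    using assms unfolding lie_algebra_def by blast
  moreover have "br y (br z x) = - br y (br x z)"
    by (metis lie_algebra_antisym[OF assms] bilinear_rneg[OF lie_algebra_bilinear[OF assms]])
  moreover have "br z (br x y) = - br (br x y) z"
    by (rule lie_algebra_antisym[OF assms])
  ultimately show ?thesis by (simp add: algebra_simps)
qed

lemma lie_algebra_bracket_lincomb:
  assumes "lie_algebra br"
  shows "br (a *\<^sub>R e + b *\<^sub>R w) (c *\<^sub>R e + d *\<^sub>R w) = (a * d - b * c) *\<^sub>R br e w"
proof -
  note bl = lie_algebra_bilinear[OF assms]
  show ?thesis
    using lie_algebra_antisym[OF assms, of w e]
    by (simp add: bilinear_ladd[OF bl] bilinear_radd[OF bl] bilinear_lmul[OF bl] bilinear_rmul[OF bl]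
        lie_algebra_alternating[OF assms] algebra_simps)
qed

lemma bilinear_eq_0_on_span:
  assumes "bilinear f" and "\<And>x y. x \<in> S \<Longrightarrow> y \<in> T \<Longrightarrow> f x y = 0"
    and "u \<in> span S" and "v \<in> span T"
  shows "f u v = 0"
proof -
  have zero: "bilinear (\<lambda>x y. 0 :: 'c)"
    by (simp add: bilinear_def linear_zero)
  have "f u v = (\<lambda>x y. 0) u v"
    by (rule bilinear_eq[OF assms(1) zero order_refl order_refl assms(3,4)]) (use assms(2) in simp)
  then show ?thesis by simp
qed

lemma lie_algebra_brackets_commute_if_sum_of_abelian:
  assumes lie: "lie_algebra br"
    and A: "\<And>u v. u \<in> A \<Longrightarrow> v \<in> A \<Longrightarrow> br u v = 0"
    and B: "\<And>u v. u \<in> B \<Longrightarrow> v \<in> B \<Longrightarrow> br u v = 0"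
    and sum: "\<And>u. \<exists>p\<in>A. \<exists>q\<in>B. u = p + q"
    and a: "a \<in> A" and a': "a' \<in> A" and b: "b \<in> B" and b': "b' \<in> B"
  shows "br (br a' b') (br a b) = 0"
proof -
  note bl = lie_algebra_bilinear[OF lie] and jac = lie_algebra_jacobi_derivation[OF lie]
  obtain p q where p: "p \<in> A" and q: "q \<in> B" and pq: "br a' b = p + q"
    using sum by blast
  obtain p' q' where p': "p' \<in> A" and q': "q' \<in> B" and pq': "br b' a = p' + q'"
    using sum by blast
  have 1: "br a' (br a b) = br a q"
    using jac[of a' a b] A[OF a' a] A[OF a p] pq
    by (simp add: bilinear_lzero[OF bl] bilinear_radd[OF bl])
  have 2: "br b' (br a q) = br p' q"
    using jac[of b' a q] B[OF b' q] B[OF q' q] pq'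
    by (simp add: bilinear_rzero[OF bl] bilinear_ladd[OF bl])
  have 3: "br b' (br a b) = br p' b"
    using jac[of b' a b] B[OF b' b] B[OF q' b] pq'
    by (simp add: bilinear_rzero[OF bl] bilinear_ladd[OF bl])
  have 4: "br a' (br p' b) = br p' q"
    using jac[of a' p' b] A[OF a' p'] A[OF p' p] pq
    by (simp add: bilinear_lzero[OF bl] bilinear_radd[OF bl])
  show ?thesis
    using jac[of a' b' "br a b"] 1 2 3 4 by simp
qed

lemma lie_algebra_metabelian_if_sum_of_abelian:
  assumes lie: "lie_algebra br"
    and A: "\<And>u v. u \<in> A \<Longrightarrow> v \<in> A \<Longrightarrow> br u v = 0"
    and B: "\<And>u v. u \<in> B \<Longrightarrow> v \<in> B \<Longrightarrow> br u v = 0"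
    and sum: "\<And>u. \<exists>p\<in>A. \<exists>q\<in>B. u = p + q"
  shows "br (br x y) (br z w) = 0"
proof -
  note bl = lie_algebra_bilinear[OF lie]
  let ?AB = "{br a b | a b. a \<in> A \<and> b \<in> B}"
  have "br x y \<in> span ?AB" for x y
  proof -
    obtain a b a' b' where "a \<in> A" "b \<in> B" "x = a + b" "a' \<in> A" "b' \<in> B" "y = a' + b'"
      using sum by meson
    then have "br x y = br a b' - br a' b"
      using A B lie_algebra_antisym[OF lie, of b a']
      by (simp add: bilinear_ladd[OF bl] bilinear_radd[OF bl])
    moreover have "br a b' \<in> ?AB" "br a' b \<in> ?AB"
      using \<open>a \<in> A\<close> \<open>b \<in> B\<close> \<open>a' \<in> A\<close> \<open>b' \<in> B\<close> by blast+
    ultimately show ?thesis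
      by (simp add: span_diff span_base)
  qed
  moreover have "br u v = 0" if "u \<in> ?AB" "v \<in> ?AB" for u v
    using that lie_algebra_brackets_commute_if_sum_of_abelian[OF lie A B sum] by blast
  ultimately show ?thesis
    using bilinear_eq_0_on_span[OF bl] by blast
qed

text \<open>A pair \<open>(x, y)\<close> stands for \<open>x + i y\<close> in the complexification.\<close>
definition complexified_bracket ::
  "('a::real_vector \<Rightarrow> 'a \<Rightarrow> 'a) \<Rightarrow> 'a \<times> 'a \<Rightarrow> 'a \<times> 'a \<Rightarrow> 'a \<times> 'a" where
  "complexified_bracket br u v =
     (br (fst u) (fst v) - br (snd u) (snd v), br (fst u) (snd v) + br (snd u) (fst v))"

lemma lie_algebra_complexified_bracket:
  assumes lie: "lie_algebra br"
  shows "lie_algebra (complexified_bracket br)"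
proof -
  note bl = lie_algebra_bilinear[OF lie]
  have jac: "br z (br x y) = - br x (br y z) - br y (br z x)" for x y z
    using lie unfolding lie_algebra_def by (metis add.commute add_diff_cancel_left' diff_0 diff_add_cancel)
  have "bilinear (complexified_bracket br)"
    unfolding bilinear_def
  proof (intro conjI allI)
    fix u :: "'a \<times> 'a"
    show "linear (complexified_bracket br u)"
      by (rule linearI)
        (auto simp: complexified_bracket_def bilinear_radd[OF bl] bilinear_rmul[OF bl] algebra_simps)
    show "linear (\<lambda>v. complexified_bracket br v u)"
      by (rule linearI)
        (auto simp: complexified_bracket_def bilinear_ladd[OF bl] bilinear_lmul[OF bl] algebra_simps)
  qed
  moreover have "complexified_bracket br u u = 0" for u
    using lie_algebra_antisym[OF lie, of "fst u" "snd u"]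
    by (simp add: complexified_bracket_def lie_algebra_alternating[OF lie] zero_prod_def)
  moreover have "complexified_bracket br u (complexified_bracket br v w)
      + complexified_bracket br v (complexified_bracket br w u)
      + complexified_bracket br w (complexified_bracket br u v) = 0" for u v w
  proof -
    obtain p1 q1 p2 q2 p3 q3 where uvw: "u = (p1, q1)" "v = (p2, q2)" "w = (p3, q3)"
      by (cases u, cases v, cases w) auto
    show ?thesis
      unfolding uvw complexified_bracket_def
      by (simp add: bilinear_radd[OF bl] bilinear_ladd[OF bl] bilinear_rsub[OF bl] bilinear_lsub[OF bl]
          jac[of p1 p2 p3] jac[of p1 p2 q3] jac[of p1 q2 p3] jac[of p1 q2 q3]
          jac[of q1 p2 p3] jac[of q1 p2 q3] jac[of q1 q2 p3] jac[of q1 q2 q3] algebra_simps zero_prod_def)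
  qed
  ultimately show ?thesis
    unfolding lie_algebra_def by blast
qed

lemma abelian_complex_structure_metabelian:
  assumes lie: "lie_algebra br" and J: "abelian_complex_structure br J"
  shows "br (br x y) (br z w) = 0"
proof -
  let ?c = "complexified_bracket br"
  have lJ: "linear J" and JJ: "\<And>x. J (J x) = - x" and JJbr: "\<And>x y. br (J x) (J y) = br x y"
    using J unfolding abelian_complex_structure_def by blast+
  have Jbr: "br (J x) y = - br x (J y)" for x y
    by (metis JJ JJbr bilinear_rneg[OF lie_algebra_bilinear[OF lie]] minus_minus)
  \<comment> \<open>the \<open>i\<close>- and \<open>-i\<close>-eigenspaces of the complex-linear extension of \<open>J\<close>\<close>
  define A where "A = range (\<lambda>x. (x, - J x))"
  define B where "B = range (\<lambda>x. (x, J x))"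
  have "?c u v = 0" if "u \<in> A" "v \<in> A" for u v
    using that Jbr JJbr lie_algebra_bilinear[OF lie]
    by (auto simp: A_def complexified_bracket_def bilinear_rneg bilinear_lneg zero_prod_def)
  moreover have "?c u v = 0" if "u \<in> B" "v \<in> B" for u v
    using that Jbr JJbr by (auto simp: B_def complexified_bracket_def zero_prod_def)
  moreover have "\<exists>p\<in>A. \<exists>q\<in>B. u = p + q" for u
  proof -
    obtain s t where u: "u = (s, t)" by (cases u)
    define a where "a = (1/2) *\<^sub>R (s + J t)"
    define b where "b = (1/2) *\<^sub>R (s - J t)"
    have "s = a + b" "t = - J a + J b"
      unfolding a_def b_def using lJ
      by (auto simp: linear_add linear_diff linear_scale JJ algebra_simps simp flip: scaleR_2)
    then have "u = (a, - J a) + (b, J b)" by (simp add: u)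
    then show ?thesis unfolding A_def B_def by blast
  qed
  ultimately have "?c (?c (x, 0) (y, 0)) (?c (z, 0) (w, 0)) = 0"
    by (rule lie_algebra_metabelian_if_sum_of_abelian[OF lie_algebra_complexified_bracket[OF lie]])
  then show ?thesis
    by (simp add: complexified_bracket_def bilinear_rzero[OF lie_algebra_bilinear[OF lie]]
        bilinear_lzero[OF lie_algebra_bilinear[OF lie]] zero_prod_def)
qed

lemma linear_inj_on_if_image_eq:
  fixes f :: "'a::euclidean_space \<Rightarrow> 'a"
  assumes lf: "linear f" and fV: "f ` V = V"
  shows "inj_on f V"
proof -
  obtain B where B: "B \<subseteq> V" "independent B" "V \<subseteq> span B" "card B = dim V"
    by (rule basis_exists)
  have fin: "finite B"
    using B(2) by (rule finiteI_independent)
  have fB: "f ` B \<subseteq> V"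
    using B(1) fV by blast
  have V_fB: "V \<subseteq> span (f ` B)"
    using B(3) fV span_linear_image[OF lf, of B] by blast
  have "card (f ` B) \<le> dim V"
    using card_image_le[OF fin, of f] B(4) by simp
  then have "independent (f ` B)"
    using card_le_dim_spanning[OF fB V_fB] fin by blast
  moreover have "card (f ` B) = card B"
    using span_card_ge_dim[OF fB V_fB] fin card_image_le[OF fin, of f] B(4) by simp
  then have "inj_on f B"
    using eq_card_imp_inj_on[OF fin] by blast
  ultimately have "inj_on f (span B)"
    using linear_inj_on_span_iff_independent_image[OF lf] by blast
  then show ?thesis
    using B(3) inj_on_subset by blast
qed

lemma complex_structure_no_real_eigenvector:
  assumes lJ: "linear J" and JJ: "\<And>x. J (J x) = - x" and Jv: "J v = a *\<^sub>R v"
  shows "v = 0"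
proof -
  have "- v = (a * a) *\<^sub>R v"
    using JJ[of v] Jv linear_scale[OF lJ, of a v] by simp
  then have "v + (a * a) *\<^sub>R v = 0"
    by (metis add.right_inverse)
  then have "(1 + a * a) *\<^sub>R v = 0"
    by (simp add: scaleR_add_left)
  moreover have "1 + a * a \<noteq> 0"
    by (metis add_pos_nonneg less_irrefl zero_less_one zero_le_square)
  ultimately show ?thesis by simp
qed

lemma complex_structure_DIM_neq_1:
  fixes J :: "'a::euclidean_space \<Rightarrow> 'a"
  assumes lJ: "linear J" and JJ: "\<And>x. J (J x) = - x"
  shows "DIM('a) \<noteq> 1"
proof
  assume "DIM('a) = 1"
  then obtain b where b: "(Basis :: 'a set) = {b}"
    by (metis One_nat_def card_1_singleton_iff)
  then have "J b \<in> span {b}"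
    by (metis span_Basis UNIV_I)
  then obtain a where "J b = a *\<^sub>R b"
    by (auto simp: span_singleton)
  then have "b = 0"
    using complex_structure_no_real_eigenvector[OF lJ JJ] by blast
  with b show False
    using nonzero_Basis by blast
qed

lemma double_dim_le_DIM_if_Int_image_trivial:
  fixes J :: "'a::euclidean_space \<Rightarrow> 'a"
  assumes lJ: "linear J" and "inj J" and V: "subspace V" and VJV: "V \<inter> J ` V \<subseteq> {0}"
  shows "2 * dim V \<le> DIM('a)"
proof -
  have "dim (J ` V) = dim V"
    using dim_image_eq[OF lJ] \<open>inj J\<close> by (metis inj_on_subset subset_UNIV)
  moreover have "dim {x + y | x y. x \<in> V \<and> y \<in> J ` V} + dim (V \<inter> J ` V) = dim V + dim (J ` V)"
    using dim_sums_Int[OF V linear_subspace_image[OF lJ V]] .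
  moreover have "dim (V \<inter> J ` V) = 0"
    using VJV by (simp add: dim_eq_0)
  ultimately show ?thesis
    using dim_subset_UNIV[of "{x + y | x y. x \<in> V \<and> y \<in> J ` V}"] by linarith
qed

lemma codim_one_complement:
  fixes V :: "'a::euclidean_space set"
  assumes V: "subspace V" and dimV: "dim V + 1 = DIM('a)"
  obtains x where "\<And>v. \<exists>t. v - t *\<^sub>R x \<in> V"
proof -
  have "V \<noteq> UNIV"
    using dimV by auto
  then obtain x where x: "x \<notin> V"
    by blast
  have spanV: "span V = V"
    using V by (simp add: span_eq_iff)
  have "dim (insert x V) = DIM('a)"
    using x dimV by (simp add: dim_insert spanV)
  then have "span (insert x V) = UNIV"
    by (simp add: dim_eq_full)
  then have "\<exists>t. v - t *\<^sub>R x \<in> V" for v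
    using span_breakdown_eq[of v x V] by (simp add: spanV)
  then show ?thesis using that by blast
qed

lemma bracket_mem_bracket_span: "br x y \<in> bracket_span br UNIV UNIV"
  unfolding bracket_span_def by (rule span_base) blast

lemma subspace_bracket_span: "subspace (bracket_span br A B)"
  unfolding bracket_span_def by (rule subspace_span)

lemma abelian_complex_structure_derived_algebra_abelian:
  assumes lie: "lie_algebra br" and J: "abelian_complex_structure br J"
    and "u \<in> bracket_span br UNIV UNIV" and "v \<in> bracket_span br UNIV UNIV"
  shows "br u v = 0"
proof -
  let ?S = "{br x y | x y. x \<in> UNIV \<and> y \<in> UNIV}"
  have "br a b = 0" if "a \<in> ?S" "b \<in> ?S" for a b
    using that abelian_complex_structure_metabelian[OF lie J] by blast
  then show ?thesis
    by (rule bilinear_eq_0_on_span[OF lie_algebra_bilinear[OF lie] _ assms(3,4)[unfolded bracket_span_def]])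
qed

lemma ad_image_abelian_derived_algebra:
  assumes lie: "lie_algebra br"
    and abelian: "\<And>u v. u \<in> bracket_span br UNIV UNIV \<Longrightarrow> v \<in> bracket_span br UNIV UNIV
      \<Longrightarrow> br u v = 0"
    and x: "\<And>v. \<exists>t. v - t *\<^sub>R x \<in> bracket_span br UNIV UNIV"
  shows "br x ` bracket_span br UNIV UNIV = bracket_span br UNIV UNIV"
proof
  let ?n = "bracket_span br UNIV UNIV"
  note bl = lie_algebra_bilinear[OF lie]
  show "br x ` ?n \<subseteq> ?n"
    using bracket_mem_bracket_span by blast
  have "br u v \<in> br x ` ?n" for u v
  proof -
    obtain s t where "u - s *\<^sub>R x \<in> ?n" and "v - t *\<^sub>R x \<in> ?n"
      using x by blast
    then obtain u0 v0 where u0: "u0 \<in> ?n" and v0: "v0 \<in> ?n"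
      and "u = s *\<^sub>R x + u0" and "v = t *\<^sub>R x + v0"
      by (metis add.commute diff_add_cancel)
    then have "br u v = br x (s *\<^sub>R v0 - t *\<^sub>R u0)"
      using abelian[OF u0 v0] lie_algebra_antisym[OF lie, of u0 x]
      by (simp add: bilinear_ladd[OF bl] bilinear_radd[OF bl] bilinear_lmul[OF bl]
          bilinear_rmul[OF bl] bilinear_rsub[OF bl] lie_algebra_alternating[OF lie])
    moreover have "s *\<^sub>R v0 - t *\<^sub>R u0 \<in> ?n"
      using u0 v0 subspace_bracket_span[of br UNIV UNIV] by (simp add: subspace_diff subspace_scale)
    ultimately show ?thesis
      by blast
  qed
  moreover have "subspace (br x ` ?n)"
    using linear_subspace_image[OF _ subspace_bracket_span] bl unfolding bilinear_def by blast
  ultimately show "?n \<subseteq> br x ` ?n"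
    unfolding bracket_span_def[of br UNIV UNIV] by (intro span_minimal) blast+
qed

lemma abelian_complex_structure_derived_algebra_transversal:
  fixes br :: "'a::euclidean_space \<Rightarrow> 'a \<Rightarrow> 'a"
  assumes lie: "lie_algebra br" and J: "abelian_complex_structure br J"
    and codim: "dim (bracket_span br UNIV UNIV) + 1 = DIM('a)"
  shows "bracket_span br UNIV UNIV \<inter> J ` bracket_span br UNIV UNIV \<subseteq> {0}"
proof -
  let ?n = "bracket_span br UNIV UNIV"
  note bl = lie_algebra_bilinear[OF lie]
  have lJ: "linear J" and JJ: "\<And>x. J (J x) = - x" and JJbr: "\<And>x y. br (J x) (J y) = br x y"
    using J unfolding abelian_complex_structure_def by blast+
  have abelian: "br u v = 0" if "u \<in> ?n" "v \<in> ?n" for u v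
    using abelian_complex_structure_derived_algebra_abelian[OF lie J that] .
  obtain x where x: "\<And>v. \<exists>t. v - t *\<^sub>R x \<in> ?n"
    using codim_one_complement[OF subspace_bracket_span codim] by blast
  have "inj_on (br x) ?n"
    using linear_inj_on_if_image_eq ad_image_abelian_derived_algebra[OF lie abelian x] bl
    unfolding bilinear_def by blast
  obtain a w where w: "w \<in> ?n" and Jx: "J x = a *\<^sub>R x + w"
    using x by (metis add.commute diff_add_cancel)
  have "u = 0" if u: "u \<in> ?n" and Ju: "J u \<in> ?n" for u
  proof -
    have "br x u = br (a *\<^sub>R x + w) (J u)"
      using JJbr[of x u] Jx by simp
    also have "\<dots> = br x (a *\<^sub>R J u)"
      using abelian[OF w Ju] by (simp add: bilinear_ladd[OF bl] bilinear_lmul[OF bl] bilinear_rmul[OF bl])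
    finally have "u = a *\<^sub>R J u"
      by (rule inj_onD[OF \<open>inj_on (br x) ?n\<close> _ u subspace_scale[OF subspace_bracket_span Ju]])
    then have "J u = (- a) *\<^sub>R u"
      by (metis JJ linear_scale[OF lJ] scaleR_minus_left scaleR_minus_right)
    then show "u = 0"
      by (rule complex_structure_no_real_eigenvector[OF lJ JJ])
  qed
  then show ?thesis
    using linear_0[OF lJ] by blast
qed

lemma lie_iso_inv:
  assumes "lie_iso br1 br2 f"
  shows "lie_iso br2 br1 (inv f)"
proof -
  have lf: "linear f" and "bij f" and hom: "\<And>u v. f (br1 u v) = br2 (f u) (f v)"
    using assms unfolding lie_iso_def by blast+
  then have fg: "f (inv f v) = v" and gf: "inv f (f u) = u" for u v
    by (simp_all add: bij_is_inj bij_is_surj surj_f_inv_f)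
  have "linear (inv f)"
  proof (rule linearI)
    show "inv f (u + v) = inv f u + inv f v" for u v
      by (metis fg gf linear_add[OF lf])
    show "inv f (r *\<^sub>R u) = r *\<^sub>R inv f u" for r u
      by (metis fg gf linear_scale[OF lf])
  qed
  moreover have "inv f (br2 u v) = br1 (inv f u) (inv f v)" for u v
    by (metis fg gf hom)
  ultimately show ?thesis
    unfolding lie_iso_def using bij_imp_bij_inv[OF \<open>bij f\<close>] by blast
qed

lemma lie_iso_aff_if_dim_two_nonabelian:
  fixes br :: "'a::euclidean_space \<Rightarrow> 'a \<Rightarrow> 'a"
  assumes lie: "lie_algebra br" and dim2: "DIM('a) = 2" and nonabelian: "br x y \<noteq> 0"
  shows "\<exists>f. lie_iso br aff_br f"
proof -
  define e where "e = br x y"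
  have "span {e} \<noteq> UNIV"
    using dim2 dim_eq_full[of "{e}"] dim_le_card[of "{e}" "{e}"] by fastforce
  then obtain w where w: "w \<notin> span {e}"
    by blast
  have "e \<noteq> 0"
    using nonabelian by (simp add: e_def)
  have "independent {w, e}"
    using w \<open>e \<noteq> 0\<close> by (simp add: independent_insertI)
  moreover have "w \<noteq> e"
    using w span_base[of e "{e}"] by blast
  ultimately have "span {w, e} = UNIV"
    using dim2 dim_eq_full[of "{w, e}"] dim_span_eq_card_independent[of "{w, e}"] by simp
  have coords: "\<exists>a b. v = a *\<^sub>R e + b *\<^sub>R w" for v
  proof -
    obtain b where "v - b *\<^sub>R w \<in> span {e}"
      using \<open>span {w, e} = UNIV\<close> span_breakdown_eq[of v w "{e}"] by blast
    then obtain a where "v - b *\<^sub>R w = a *\<^sub>R e"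
      by (auto simp: span_singleton)
    then show ?thesis
      by (metis diff_add_cancel)
  qed
  obtain a b c d where x: "x = a *\<^sub>R e + b *\<^sub>R w" and y: "y = c *\<^sub>R e + d *\<^sub>R w"
    using coords by meson
  define l where "l = a * d - b * c"
  have "br x y = l *\<^sub>R br e w"
    unfolding x y l_def by (rule lie_algebra_bracket_lincomb[OF lie])
  then have e: "e = l *\<^sub>R br e w"
    by (metis e_def)
  with \<open>e \<noteq> 0\<close> have "l \<noteq> 0"
    by auto
  have bracket: "br e (l *\<^sub>R w) = e"
    using e by (simp add: bilinear_rmul[OF lie_algebra_bilinear[OF lie]])
  define g where "g p = fst p *\<^sub>R e + snd p *\<^sub>R (l *\<^sub>R w)" for p :: "real \<times> real"
  have "linear g"
    by (rule linearI) (auto simp: g_def algebra_simps)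
  moreover have "surj g"
  proof -
    have "v \<in> range g" for v
    proof -
      obtain a b where "v = a *\<^sub>R e + b *\<^sub>R w"
        using coords by blast
      moreover have "g (a, b / l) = a *\<^sub>R e + b *\<^sub>R w"
        using \<open>l \<noteq> 0\<close> by (simp add: g_def)
      ultimately show ?thesis
        by (metis rangeI)
    qed
    then show ?thesis
      by blast
  qed
  moreover have "inj g"
    by (rule linear_surjective_imp_injective[OF \<open>linear g\<close> \<open>surj g\<close>]) (simp add: dim2)
  moreover have "br (g p) (g q) = g (aff_br p q)" for p q
  proof -
    have "br (g p) (g q) = (fst p * snd q - snd p * fst q) *\<^sub>R br e (l *\<^sub>R w)"
      unfolding g_def by (rule lie_algebra_bracket_lincomb[OF lie])
    then show ?thesis
      by (simp add: bracket g_def aff_br_def)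
  qed
  ultimately have "lie_iso aff_br br g"
    by (simp add: lie_iso_def bij_def)
  then show ?thesis
    using lie_iso_inv by blast
qed

theorem mainTheorem13:
  fixes br :: "'a::euclidean_space \<Rightarrow> 'a \<Rightarrow> 'a"
  assumes "lie_algebra br"
    and "solvable_lie br"
    and "dim (bracket_span br UNIV UNIV) + 1 = DIM('a)"
    and "\<exists>J. abelian_complex_structure br J"
  shows "\<exists>f. lie_iso br aff_br f"
proof -
  obtain J where J: "abelian_complex_structure br J"
    using assms(4) by blast
  have lJ: "linear J" and JJ: "\<And>x. J (J x) = - x"
    using J unfolding abelian_complex_structure_def by blast+
  have "inj J"
    by (rule injI) (metis JJ minus_equation_iff)
  let ?n = "bracket_span br UNIV UNIV"
  have "2 * dim ?n \<le> DIM('a)"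
    using double_dim_le_DIM_if_Int_image_trivial[OF lJ \<open>inj J\<close> subspace_bracket_span
        abelian_complex_structure_derived_algebra_transversal[OF assms(1) J assms(3)]] .
  moreover have "DIM('a) \<noteq> 1"
    by (rule complex_structure_DIM_neq_1[OF lJ JJ])
  ultimately have "dim ?n = 1" and "DIM('a) = 2"
    using assms(3) by linarith+
  then have "\<not> ?n \<subseteq> {0}"
    by (metis dim_eq_0 one_neq_zero)
  have "\<exists>x y. br x y \<noteq> 0"
  proof (rule ccontr)
    assume "\<not> (\<exists>x y. br x y \<noteq> 0)"
    then have "?n \<subseteq> span {0}"
      unfolding bracket_span_def by (intro span_mono) auto
    with \<open>\<not> ?n \<subseteq> {0}\<close> show False
      by simp
  qed
  then show ?thesis
    using lie_iso_aff_if_dim_two_nonabelian[OF assms(1) \<open>DIM('a) = 2\<close>] by blast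
qed

end
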